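(* Let $\pi:\mathbb{F}\twoheadrightarrow\Gamma$ be an epimorphism from a free group on a finite basis $X$ which is not an isomorphism, let $S=\pi(X)$, and suppose $\Gamma$ is sofic and stable. Then there exists $C>0$ such that for all $l\ge C$, $$\mathcal{D}_\Gamma^S\big(2F_\Gamma^\pi(10l)\big)!\ge\mathcal{R}_\Gamma^S(l).$$
   Context: For finite $\Omega$, $d_\Omega(\sigma,\tau)=|\{\omega:\sigma(\omega)\ne\tau(\omega)\}|/|\Omega|$. A pair $(\delta,E)$, $\delta\in(0,1]$, $E\subseteq\ker\pi$ finite, is valid for $\epsilon>0$ if for every finite $\Omega$ and homomorphism $\rho:\mathbb{F}\to\mathrm{Sym}(\Omega)$ with $d_\Omega(\rho(r),\mathrm{id})<\delta$ for all $r\in E$ there is a homomorphism $\phi:\Gamma\to\mathrm{Sym}(\Omega)$ with $d_\Omega(\rho(x),\phi(\pi(x)))<\epsilon$ for all $x\in X$; $\Gamma$ is stable if valid pairs exist for all $\epsilon$. $F_\Gamma^\pi(x)=\inf\{\|E\|/\delta:(\delta,E)\text{ valid for }1/x\}$, $\|E\|=\sum_{r\in E}|r|$ (word length in $X$). For finite $A\subseteq\Gamma$ and $\epsilon>0$, an $(A,\epsilon)$-almost representation is a map $\phi:A\to\mathrm{Sym}(\Omega)$, $\Omega$ finite, such that for $g,h\in A$: if $gh\in A$ then $d_\Omega(\phi(gh),\phi(g)\phi(h))<\epsilon$; if $g\ne e$ then $d_\Omega(\phi(g),\mathrm{id})>1-\epsilon$; if $e\in A$ then $\phi(e)=\mathrm{id}$.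 $\Gamma$ is sofic if these exist for all finite $A$ and $\epsilon>0$. $B_S(l)$ is the ball of radius $l$ in the word metric of $S$. The sofic profile $\mathcal{D}_\Gamma^S(l)$ is the minimal $|\Omega|$ for which a $(B_S(l),1/l)$-almost representation into $\mathrm{Sym}(\Omega)$ exists; for real $t\ge1$, $\mathcal{D}_\Gamma^S(t)=\mathcal{D}_\Gamma^S(\lfloor t\rfloor)$. $\mathcal{R}_\Gamma^S(l)$ is the minimal order of a finite group $\Delta$ with a homomorphism $\Gamma\to\Delta$ injective on $B_S(l)$. *)

theory Defs
  imports Complex_Main "HOL-Algebra.Bij" "HOL-Library.Extended_Nat"
begin

(* Letters of the free group on basis X: (x, True) stands for x, (x, False) for x^{-1}.
   Elements of the free group F(X) are the reduced words over X. *)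
type_synonym 'x letter = "'x \<times> bool"

definition words_on :: "'x set \<Rightarrow> 'x letter list set" where
  "words_on X = {w. \<forall>a \<in> set w. fst a \<in> X}"

fun reduced :: "'x letter list \<Rightarrow> bool" where
  "reduced [] = True"
| "reduced [a] = True"
| "reduced (a # b # w) = ((\<not> (fst a = fst b \<and> snd a \<noteq> snd b)) \<and> reduced (b # w))"

definition free_elems :: "'x set \<Rightarrow> 'x letter list set" where
  "free_elems X = {w \<in> words_on X. reduced w}"

definition eval_word :: "('h, 'm) monoid_scheme \<Rightarrow> ('x \<Rightarrow> 'h) \<Rightarrow> 'x letter list \<Rightarrow> 'h" where
  "eval_word H f w =
     foldr (\<lambda>a acc. (if snd a then f (fst a) else inv\<^bsub>H\<^esub> (f (fst a))) \<otimes>\<^bsub>H\<^esub> acc) w \<one>\<^bsub>H\<^esub>"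

definition dOm :: "nat set \<Rightarrow> (nat \<Rightarrow> nat) \<Rightarrow> (nat \<Rightarrow> nat) \<Rightarrow> real" where
  "dOm \<Omega> \<sigma> \<tau> = real (card {\<omega> \<in> \<Omega>. \<sigma> \<omega> \<noteq> \<tau> \<omega>}) / real (card \<Omega>)"

definition kerpi :: "('g, 'm) monoid_scheme \<Rightarrow> 'x set \<Rightarrow> ('x \<Rightarrow> 'g) \<Rightarrow> 'x letter list set" where
  "kerpi G X s = {w \<in> free_elems X. eval_word G s w = \<one>\<^bsub>G\<^esub>}"

(* homomorphisms rho : F(X) -> Sym(Omega) correspond to assignments r : X -> Sym(Omega) *)
definition valid_pair :: "('g, 'm) monoid_scheme \<Rightarrow> 'x set \<Rightarrow> ('x \<Rightarrow> 'g) \<Rightarrow> real \<Rightarrow> real \<Rightarrow> 'x letter list set \<Rightarrow> bool" where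
  "valid_pair G X s \<epsilon> \<delta> E \<longleftrightarrow>
     0 < \<delta> \<and> \<delta> \<le> 1 \<and> finite E \<and> E \<subseteq> kerpi G X s \<and>
     (\<forall>(\<Omega>::nat set) r. finite \<Omega> \<longrightarrow> r ` X \<subseteq> carrier (BijGroup \<Omega>) \<longrightarrow>
        (\<forall>w \<in> E. dOm \<Omega> (eval_word (BijGroup \<Omega>) r w) \<one>\<^bsub>BijGroup \<Omega>\<^esub> < \<delta>) \<longrightarrow>
        (\<exists>\<phi> \<in> hom G (BijGroup \<Omega>). \<forall>x \<in> X. dOm \<Omega> (r x) (\<phi> (s x)) < \<epsilon>))"

definition stable :: "('g, 'm) monoid_scheme \<Rightarrow> 'x set \<Rightarrow> ('x \<Rightarrow> 'g) \<Rightarrow> bool" where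
  "stable G X s \<longleftrightarrow> (\<forall>\<epsilon>>0. \<exists>\<delta> E. valid_pair G X s \<epsilon> \<delta> E)"

definition norm_rel :: "'x letter list set \<Rightarrow> nat" where
  "norm_rel E = (\<Sum>r\<in>E. length r)"

definition stab_fun :: "('g, 'm) monoid_scheme \<Rightarrow> 'x set \<Rightarrow> ('x \<Rightarrow> 'g) \<Rightarrow> real \<Rightarrow> real" where
  "stab_fun G X s x = Inf {real (norm_rel E) / \<delta> | \<delta> E. valid_pair G X s (1 / x) \<delta> E}"

definition almost_rep :: "('g, 'm) monoid_scheme \<Rightarrow> 'g set \<Rightarrow> real \<Rightarrow> nat set \<Rightarrow> ('g \<Rightarrow> nat \<Rightarrow> nat) \<Rightarrow> bool" where
  "almost_rep G A \<epsilon> \<Omega> \<phi> \<longleftrightarrow> finite \<Omega> \<and> \<phi> ` A \<subseteq> carrier (BijGroup \<Omega>) \<and>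
     (\<forall>g\<in>A. \<forall>h\<in>A. g \<otimes>\<^bsub>G\<^esub> h \<in> A \<longrightarrow>
        dOm \<Omega> (\<phi> (g \<otimes>\<^bsub>G\<^esub> h)) (\<phi> g \<otimes>\<^bsub>BijGroup \<Omega>\<^esub> \<phi> h) < \<epsilon>) \<and>
     (\<forall>g\<in>A. g \<noteq> \<one>\<^bsub>G\<^esub> \<longrightarrow> dOm \<Omega> (\<phi> g) \<one>\<^bsub>BijGroup \<Omega>\<^esub> > 1 - \<epsilon>) \<and>
     (\<one>\<^bsub>G\<^esub> \<in> A \<longrightarrow> \<phi> \<one>\<^bsub>G\<^esub> = \<one>\<^bsub>BijGroup \<Omega>\<^esub>)"

definition sofic :: "('g, 'm) monoid_scheme \<Rightarrow> bool" where
  "sofic G \<longleftrightarrow> (\<forall>A \<epsilon>. finite A \<longrightarrow> A \<subseteq> carrier G \<longrightarrow> \<epsilon> > 0 \<longrightarrow>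
      (\<exists>(\<Omega>::nat set) \<phi>. almost_rep G A \<epsilon> \<Omega> \<phi>))"

definition ballS :: "('g, 'm) monoid_scheme \<Rightarrow> 'x set \<Rightarrow> ('x \<Rightarrow> 'g) \<Rightarrow> nat \<Rightarrow> 'g set" where
  "ballS G X s l = {eval_word G s w | w. w \<in> words_on X \<and> length w \<le> l}"

definition sofic_profile :: "('g, 'm) monoid_scheme \<Rightarrow> 'x set \<Rightarrow> ('x \<Rightarrow> 'g) \<Rightarrow> nat \<Rightarrow> nat" where
  "sofic_profile G X s l = (LEAST n. \<exists>(\<Omega>::nat set) \<phi>. card \<Omega> = n \<and>
       almost_rep G (ballS G X s l) (1 / real l) \<Omega> \<phi>)"

definition sofic_profile_real :: "('g, 'm) monoid_scheme \<Rightarrow> 'x set \<Rightarrow> ('x \<Rightarrow> 'g) \<Rightarrow> real \<Rightarrow> nat" where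
  "sofic_profile_real G X s t = sofic_profile G X s (nat \<lfloor>t\<rfloor>)"

(* R(l); infinity if no such finite quotient exists. Finite groups are taken on
   carriers of naturals (every finite group is isomorphic to one). *)
definition rf_profile :: "('g, 'm) monoid_scheme \<Rightarrow> 'x set \<Rightarrow> ('x \<Rightarrow> 'g) \<Rightarrow> nat \<Rightarrow> enat" where
  "rf_profile G X s l = Inf {enat (card (carrier \<Delta>)) | \<Delta> :: nat monoid.
       group \<Delta> \<and> finite (carrier \<Delta>) \<and> (\<exists>h \<in> hom G \<Delta>. inj_on h (ballS G X s l))}"

end

(* A nonempty reduced relator w of length L < N acts nontrivially on {0..<N}: the generators
   act by permutations that walk the point L back to 0 along w and fix everything outside
   {0..L}, so that every word moves at most L + 1 points.  Testing a valid pair (delta, E) for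
   1/N against this action shows that E contains a nonempty relator and delta <= (L + 1)/N;
   applied to a nonempty relator of E itself this gives F(N) >= N/2.

   Now let t = 2 F(10 l) >= 10 l, take a valid pair with norm E / delta < t and a
   (B(t), 1/t)-almost representation phi of degree D(t).  Relators in E are shorter than
   t delta, so phi almost kills them, and stability gives a homomorphism psi into Sym(Omega)
   with psi(s x) within 1/(10 l) of phi(s x).  If g /= h in B(l) had psi g = psi h, a word
   of length at most 2 l for g^-1 h would be sent by phi both within 1/2 of the identity and
   at distance nearly 1 from it.  Hence psi is injective on B(l), and its image is a finite
   quotient of order at most D(t)!. *)
theory Submission
  imports Defs "HOL-Combinatorics.Permutations"
begin

definition eval_letter :: "('h, 'm) monoid_scheme \<Rightarrow> ('x \<Rightarrow> 'h) \<Rightarrow> 'x letter \<Rightarrow> 'h" where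
  "eval_letter H f a = (if snd a then f (fst a) else inv\<^bsub>H\<^esub> (f (fst a)))"

definition inv_word :: "'x letter list \<Rightarrow> 'x letter list" where
  "inv_word u = rev (map (\<lambda>(x, b). (x, \<not> b)) u)"

lemma eval_word_Nil [simp]: "eval_word H f [] = \<one>\<^bsub>H\<^esub>"
  by (simp add: eval_word_def)

lemma eval_word_Cons [simp]: "eval_word H f (a # w) = eval_letter H f a \<otimes>\<^bsub>H\<^esub> eval_word H f w"
  by (simp add: eval_word_def eval_letter_def)

lemma words_on_Nil [simp]: "[] \<in> words_on X"
  by (simp add: words_on_def)

lemma words_on_Cons [simp]: "a # w \<in> words_on X \<longleftrightarrow> fst a \<in> X \<and> w \<in> words_on X"
  by (auto simp: words_on_def)

lemma words_on_append [simp]: "u @ v \<in> words_on X \<longleftrightarrow> u \<in> words_on X \<and> v \<in> words_on X"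
  by (auto simp: words_on_def)

lemma words_on_UNIV [simp]: "w \<in> words_on UNIV"
  by (simp add: words_on_def)

lemma inv_word_in_words_on: "u \<in> words_on X \<Longrightarrow> inv_word u \<in> words_on X"
  by (auto simp: inv_word_def words_on_def)

lemma length_inv_word [simp]: "length (inv_word u) = length u"
  by (simp add: inv_word_def)

context
  fixes H :: "('h, 'm) monoid_scheme" and f :: "'x \<Rightarrow> 'h" and X :: "'x set"
  assumes H: "group H" and f: "f ` X \<subseteq> carrier H"
begin

interpretation H: group H by (rule H)

lemma eval_letter_closed: "fst a \<in> X \<Longrightarrow> eval_letter H f a \<in> carrier H"
  using f by (auto simp: eval_letter_def)

lemma eval_word_closed: "w \<in> words_on X \<Longrightarrow> eval_word H f w \<in> carrier H"
  by (induction w) (auto simp: eval_letter_closed)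

lemma eval_word_append:
  "u \<in> words_on X \<Longrightarrow> v \<in> words_on X \<Longrightarrow> eval_word H f (u @ v) = eval_word H f u \<otimes>\<^bsub>H\<^esub> eval_word H f v"
  by (induction u) (auto simp: eval_letter_closed eval_word_closed H.m_assoc)

lemma eval_word_inv_word:
  "u \<in> words_on X \<Longrightarrow> eval_word H f (inv_word u) = inv\<^bsub>H\<^esub> (eval_word H f u)"
proof (induction u)
  case (Cons a u)
  obtain x b where a: "a = (x, b)" by fastforce
  have x: "f x \<in> carrier H" using Cons.prems f a by auto
  have "inv_word (a # u) = inv_word u @ [(x, \<not> b)]" by (simp add: inv_word_def a)
  then have "eval_word H f (inv_word (a # u)) = inv\<^bsub>H\<^esub> (eval_word H f u) \<otimes>\<^bsub>H\<^esub> eval_letter H f (x, \<not> b)"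
    using Cons a x by (simp add: eval_word_append inv_word_in_words_on eval_letter_def)
  also have "\<dots> = inv\<^bsub>H\<^esub> (eval_letter H f a \<otimes>\<^bsub>H\<^esub> eval_word H f u)"
    using Cons a x by (simp add: eval_letter_def eval_word_closed H.inv_mult_group)
  finally show ?case by simp
qed (simp add: inv_word_def)

lemma eval_word_hom:
  assumes "group K" "h \<in> hom H K" "w \<in> words_on X"
  shows "h (eval_word H f w) = eval_word K (h \<circ> f) w"
proof -
  interpret hom: group_hom H K h
    using assms H by (simp add: group_hom_def group_hom_axioms_def)
  show ?thesis
    using assms(3) f
    by (induction w) (auto simp: eval_letter_def eval_word_closed hom.hom_mult hom.hom_inv)
qed

end

lemma eval_word_cong:
  "(\<And>a. a \<in> set w \<Longrightarrow> f (fst a) = g (fst a)) \<Longrightarrow> eval_word H f w = eval_word H g w"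
  by (induction w) (auto simp: eval_letter_def)

lemma reduced_nth_Suc:
  assumes "reduced w" "Suc k < length w" "fst (w ! k) = fst (w ! Suc k)"
  shows "snd (w ! k) = snd (w ! Suc k)"
  using assms
proof (induction w arbitrary: k rule: reduced.induct)
  case (3 a b w)
  then show ?case by (cases k) auto
qed auto

lemma eval_word_in_ballS: "w \<in> words_on X \<Longrightarrow> length w \<le> l \<Longrightarrow> eval_word G s w \<in> ballS G X s l"
  by (auto simp: ballS_def)

lemma one_in_ballS: "\<one>\<^bsub>G\<^esub> \<in> ballS G X s l"
  using eval_word_in_ballS[of "[]"] by simp

lemma ballS_subset_carrier: "group G \<Longrightarrow> s ` X \<subseteq> carrier G \<Longrightarrow> ballS G X s l \<subseteq> carrier G"
  by (auto simp: ballS_def eval_word_closed)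

lemma generator_in_ballS:
  assumes "group G" "s ` X \<subseteq> carrier G" "x \<in> X" "1 \<le> l"
  shows "s x \<in> ballS G X s l"
proof -
  have "s x \<in> carrier G" using assms(2,3) by auto
  then have "eval_word G s [(x, True)] = s x"
    using assms(1) by (simp add: eval_letter_def group.is_monoid monoid.r_one)
  then show ?thesis
    using eval_word_in_ballS[of "[(x, True)]" X l G s] assms by simp
qed

lemma finite_ballS: "finite X \<Longrightarrow> finite (ballS G X s l)"
proof -
  assume "finite X"
  then have "finite {w. set w \<subseteq> X \<times> (UNIV :: bool set) \<and> length w \<le> l}"
    by (intro finite_lists_length_le) auto
  moreover have "ballS G X s l \<subseteq> eval_word G s ` {w. set w \<subseteq> X \<times> UNIV \<and> length w \<le> l}"
    by (auto simp: ballS_def words_on_def mem_Times_iff intro!: imageI)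
  ultimately show ?thesis
    using finite_surj by blast
qed

lemma ballS_inv_mult_word:
  assumes "group G" "s ` X \<subseteq> carrier G" "g \<in> ballS G X s l" "h \<in> ballS G X s l"
  obtains w where "w \<in> words_on X" "length w \<le> 2 * l" "eval_word G s w = inv\<^bsub>G\<^esub> g \<otimes>\<^bsub>G\<^esub> h"
proof -
  obtain u v where "u \<in> words_on X" "length u \<le> l" "g = eval_word G s u"
    and "v \<in> words_on X" "length v \<le> l" "h = eval_word G s v"
    using assms(3,4) by (auto simp: ballS_def)
  then show ?thesis
    using assms(1,2)
    by (intro that[of "inv_word u @ v"])
      (simp_all add: inv_word_in_words_on eval_word_append eval_word_inv_word)
qed

section \<open>The normalized Hamming distance on permutations\<close>

lemma BijGroup_mult_apply:
  "a \<in> carrier (BijGroup \<Omega>) \<Longrightarrow> b \<in> carrier (BijGroup \<Omega>) \<Longrightarrow> p \<in> \<Omega>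
    \<Longrightarrow> (a \<otimes>\<^bsub>BijGroup \<Omega>\<^esub> b) p = a (b p)"
  by (simp add: BijGroup_def compose_def)

lemma BijGroup_one_apply: "p \<in> \<Omega> \<Longrightarrow> \<one>\<^bsub>BijGroup \<Omega>\<^esub> p = p"
  by (simp add: BijGroup_def)

lemma BijGroup_bij_betw: "a \<in> carrier (BijGroup \<Omega>) \<Longrightarrow> bij_betw a \<Omega> \<Omega>"
  by (simp add: BijGroup_def Bij_def)

lemma dOm_sym: "dOm \<Omega> a b = dOm \<Omega> b a"
  unfolding dOm_def by (metis (no_types, lifting) Collect_cong)

lemma dOm_self [simp]: "dOm \<Omega> a a = 0"
  by (simp add: dOm_def)

lemma dOm_triangle:
  assumes "finite \<Omega>"
  shows "dOm \<Omega> a c \<le> dOm \<Omega> a b + dOm \<Omega> b c"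
proof -
  have "card {\<omega> \<in> \<Omega>. a \<omega> \<noteq> c \<omega>} \<le> card ({\<omega> \<in> \<Omega>. a \<omega> \<noteq> b \<omega>} \<union> {\<omega> \<in> \<Omega>. b \<omega> \<noteq> c \<omega>})"
    using assms by (intro card_mono) auto
  also have "\<dots> \<le> card {\<omega> \<in> \<Omega>. a \<omega> \<noteq> b \<omega>} + card {\<omega> \<in> \<Omega>. b \<omega> \<noteq> c \<omega>}"
    by (rule card_Un_le)
  finally show ?thesis
    unfolding dOm_def by (simp add: add_divide_distrib[symmetric] divide_right_mono)
qed

lemma dOm_mult_left:
  assumes "a \<in> carrier (BijGroup \<Omega>)" "b \<in> carrier (BijGroup \<Omega>)" "c \<in> carrier (BijGroup \<Omega>)"
  shows "dOm \<Omega> (c \<otimes>\<^bsub>BijGroup \<Omega>\<^esub> a) (c \<otimes>\<^bsub>BijGroup \<Omega>\<^esub> b) = dOm \<Omega> a b"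
proof -
  have "inj_on c \<Omega>"
    using BijGroup_bij_betw[OF assms(3)] by (rule bij_betw_imp_inj_on)
  moreover have "a p \<in> \<Omega>" "b p \<in> \<Omega>" if "p \<in> \<Omega>" for p
    using that bij_betw_apply[OF BijGroup_bij_betw[OF assms(1)]] bij_betw_apply[OF BijGroup_bij_betw[OF assms(2)]]
    by auto
  ultimately have "{\<omega> \<in> \<Omega>. c (a \<omega>) \<noteq> c (b \<omega>)} = {\<omega> \<in> \<Omega>. a \<omega> \<noteq> b \<omega>}"
    by (auto simp: inj_on_def)
  then show ?thesis
    using assms by (simp add: dOm_def BijGroup_mult_apply cong: conj_cong)
qed

lemma dOm_mult_right:
  assumes "a \<in> carrier (BijGroup \<Omega>)" "b \<in> carrier (BijGroup \<Omega>)" "c \<in> carrier (BijGroup \<Omega>)"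
  shows "dOm \<Omega> (a \<otimes>\<^bsub>BijGroup \<Omega>\<^esub> c) (b \<otimes>\<^bsub>BijGroup \<Omega>\<^esub> c) = dOm \<Omega> a b"
proof -
  have c: "bij_betw c \<Omega> \<Omega>" by (rule BijGroup_bij_betw[OF assms(3)])
  then have "c ` {\<omega> \<in> \<Omega>. a (c \<omega>) \<noteq> b (c \<omega>)} = {\<omega> \<in> \<Omega>. a \<omega> \<noteq> b \<omega>}"
    by (auto simp: bij_betw_def)
  moreover have "inj_on c {\<omega> \<in> \<Omega>. a (c \<omega>) \<noteq> b (c \<omega>)}"
    using c by (auto simp: bij_betw_def intro: inj_on_subset)
  ultimately have "card {\<omega> \<in> \<Omega>. a (c \<omega>) \<noteq> b (c \<omega>)} = card {\<omega> \<in> \<Omega>. a \<omega> \<noteq> b \<omega>}"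
    using card_image by fastforce
  then show ?thesis
    using assms by (simp add: dOm_def BijGroup_mult_apply cong: conj_cong)
qed

lemma dOm_inv:
  assumes a: "a \<in> carrier (BijGroup \<Omega>)" and b: "b \<in> carrier (BijGroup \<Omega>)"
  shows "dOm \<Omega> (inv\<^bsub>BijGroup \<Omega>\<^esub> a) (inv\<^bsub>BijGroup \<Omega>\<^esub> b) = dOm \<Omega> a b"
proof -
  interpret Sym: group "BijGroup \<Omega>" by (rule group_BijGroup)
  have "dOm \<Omega> (inv\<^bsub>BijGroup \<Omega>\<^esub> a) (inv\<^bsub>BijGroup \<Omega>\<^esub> b)
      = dOm \<Omega> \<one>\<^bsub>BijGroup \<Omega>\<^esub> (a \<otimes>\<^bsub>BijGroup \<Omega>\<^esub> inv\<^bsub>BijGroup \<Omega>\<^esub> b)"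
    using dOm_mult_left[of "inv\<^bsub>BijGroup \<Omega>\<^esub> a" \<Omega> "inv\<^bsub>BijGroup \<Omega>\<^esub> b" a] a b by simp
  also have "\<dots> = dOm \<Omega> b a"
    using dOm_mult_right[of "\<one>\<^bsub>BijGroup \<Omega>\<^esub>" \<Omega> "a \<otimes>\<^bsub>BijGroup \<Omega>\<^esub> inv\<^bsub>BijGroup \<Omega>\<^esub> b" b] a b
    by (simp add: Sym.m_assoc)
  finally show ?thesis by (simp add: dOm_sym)
qed

lemma dOm_less_inverse_card_imp_eq:
  assumes "a \<in> carrier (BijGroup \<Omega>)" "b \<in> carrier (BijGroup \<Omega>)"
    and "finite \<Omega>" "dOm \<Omega> a b < 1 / real (card \<Omega>)"
  shows "a = b"
proof (rule extensionalityI)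
  have "real (card {\<omega> \<in> \<Omega>. a \<omega> \<noteq> b \<omega>}) < 1"
    using assms(4) by (cases "card \<Omega> = 0") (auto simp: dOm_def divide_less_cancel)
  then have "{\<omega> \<in> \<Omega>. a \<omega> \<noteq> b \<omega>} = {}"
    using assms(3) by simp
  then show "a p = b p" if "p \<in> \<Omega>" for p
    using that by blast
qed (use assms(1,2) in \<open>auto simp: BijGroup_def Bij_def\<close>)

lemma dOm_eval_word_le:
  assumes "finite \<Omega>" "\<rho> ` X \<subseteq> carrier (BijGroup \<Omega>)" "\<tau> ` X \<subseteq> carrier (BijGroup \<Omega>)"
    and "\<And>x. x \<in> X \<Longrightarrow> dOm \<Omega> (\<rho> x) (\<tau> x) \<le> e" "u \<in> words_on X"
  shows "dOm \<Omega> (eval_word (BijGroup \<Omega>) \<rho> u) (eval_word (BijGroup \<Omega>) \<tau> u) \<le> real (length u) * e"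
  using assms(5)
proof (induction u)
  case (Cons a u)
  let ?Sym = "BijGroup \<Omega>"
  have a: "fst a \<in> X" and u: "u \<in> words_on X" using Cons.prems by auto
  define \<rho>a \<tau>a \<rho>u \<tau>u
    where "\<rho>a = eval_letter ?Sym \<rho> a" and "\<tau>a = eval_letter ?Sym \<tau> a"
      and "\<rho>u = eval_word ?Sym \<rho> u" and "\<tau>u = eval_word ?Sym \<tau> u"
  have closed: "\<rho>a \<in> carrier ?Sym" "\<tau>a \<in> carrier ?Sym" "\<rho>u \<in> carrier ?Sym" "\<tau>u \<in> carrier ?Sym"
    using assms(2,3) eval_letter_closed[OF group_BijGroup _ a] eval_word_closed[OF group_BijGroup _ u]
    by (auto simp: \<rho>a_def \<tau>a_def \<rho>u_def \<tau>u_def)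
  have "dOm \<Omega> \<rho>a \<tau>a \<le> e"
    using assms(2-4) a by (auto simp: \<rho>a_def \<tau>a_def eval_letter_def dOm_inv image_subset_iff)
  have "dOm \<Omega> (\<rho>a \<otimes>\<^bsub>?Sym\<^esub> \<rho>u) (\<tau>a \<otimes>\<^bsub>?Sym\<^esub> \<tau>u)
      \<le> dOm \<Omega> (\<rho>a \<otimes>\<^bsub>?Sym\<^esub> \<rho>u) (\<rho>a \<otimes>\<^bsub>?Sym\<^esub> \<tau>u) + dOm \<Omega> (\<rho>a \<otimes>\<^bsub>?Sym\<^esub> \<tau>u) (\<tau>a \<otimes>\<^bsub>?Sym\<^esub> \<tau>u)"
    by (rule dOm_triangle[OF assms(1)])
  also have "\<dots> = dOm \<Omega> \<rho>u \<tau>u + dOm \<Omega> \<rho>a \<tau>a"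
    using closed by (simp add: dOm_mult_left dOm_mult_right)
  also have "\<dots> \<le> real (length u) * e + e"
    using Cons.IH[OF u] \<open>dOm \<Omega> \<rho>a \<tau>a \<le> e\<close> by (simp add: \<rho>u_def \<tau>u_def)
  finally show ?case
    by (simp add: \<rho>a_def \<tau>a_def \<rho>u_def \<tau>u_def algebra_simps)
qed simp

section \<open>A reduced word acting on a path\<close>

lemma inj_on_extends_to_permutation:
  assumes "finite A" "D \<subseteq> A" "f ` D \<subseteq> A" "inj_on f D"
  obtains \<sigma> where "\<sigma> permutes A" "\<And>p. p \<in> D \<Longrightarrow> \<sigma> p = f p"
proof -
  have "card (A - D) = card (A - f ` D)"
    using assms by (simp add: card_Diff_subset finite_subset card_image)
  then obtain g where g: "bij_betw g (A - D) (A - f ` D)"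
    using assms(1) finite_same_card_bij by blast
  have "bij_betw (\<lambda>p. if p \<in> D then f p else g p) (D \<union> (A - D)) (f ` D \<union> (A - f ` D))"
    using assms(4) g by (intro bij_betw_disjoint_Un) (auto simp: bij_betw_imageI)
  moreover have "D \<union> (A - D) = A" "f ` D \<union> (A - f ` D) = A"
    using assms by auto
  ultimately have "bij_betw (\<lambda>p. if p \<in> D then f p else if p \<in> A then g p else p) A A"
    by (auto elim!: bij_betw_cong[THEN iffD1, rotated])
  then have "(\<lambda>p. if p \<in> D then f p else if p \<in> A then g p else p) permutes A"
    using assms(2) by (intro bij_imp_permutes) auto
  then show ?thesis
    by (rule that) simp
qed

text \<open>Reducedness is exactly what makes the prescriptions for each letter a partial injection.\<close>

lemma reduced_word_path_permutations:
  fixes w :: "'x letter list"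
  assumes red: "reduced w"
  obtains \<sigma> :: "'x \<Rightarrow> nat \<Rightarrow> nat"
  where "\<And>x. \<sigma> x permutes {..length w}"
    and "\<And>k. k < length w \<Longrightarrow> snd (w ! k) \<Longrightarrow> \<sigma> (fst (w ! k)) (Suc k) = k"
    and "\<And>k. k < length w \<Longrightarrow> \<not> snd (w ! k) \<Longrightarrow> \<sigma> (fst (w ! k)) k = Suc k"
proof -
  define down where "down x = {Suc k | k. k < length w \<and> w ! k = (x, True)}" for x
  define up where "up x = {k. k < length w \<and> w ! k = (x, False)}" for x
  define f where "f x p = (if p \<in> down x then p - 1 else Suc p)" for x p
  have adjacent: "w ! k = (x, b) \<Longrightarrow> w ! Suc k = (x, c) \<Longrightarrow> Suc k < length w \<Longrightarrow> b = c" for x k b c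
    using reduced_nth_Suc[OF red, of k] by simp
  have "\<exists>\<sigma>. \<sigma> permutes {..length w} \<and> (\<forall>p \<in> down x \<union> up x. \<sigma> p = f x p)" for x
  proof -
    have "inj_on (f x) (down x \<union> up x)"
      by (auto simp: inj_on_def f_def down_def up_def dest: adjacent)
    moreover have "down x \<union> up x \<subseteq> {..length w}" "f x ` (down x \<union> up x) \<subseteq> {..length w}"
      by (auto simp: f_def down_def up_def)
    ultimately show ?thesis
      by (metis inj_on_extends_to_permutation finite_atMost)
  qed
  then obtain \<sigma> where \<sigma>: "\<And>x. \<sigma> x permutes {..length w}" "\<And>x p. p \<in> down x \<union> up x \<Longrightarrow> \<sigma> x p = f x p"
    by metis
  show ?thesis
  proof (rule that[OF \<sigma>(1)])
    fix k assume "k < length w" "snd (w ! k)"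
    then show "\<sigma> (fst (w ! k)) (Suc k) = k"
      by (subst \<sigma>(2)) (auto simp: f_def down_def up_def prod_eq_iff)
  next
    fix k assume k: "k < length w" "\<not> snd (w ! k)"
    have "k \<notin> down (fst (w ! k))"
      using k reduced_nth_Suc[OF red, of "k - 1"] by (cases k) (auto simp: down_def prod_eq_iff)
    with k show "\<sigma> (fst (w ! k)) k = Suc k"
      by (subst \<sigma>(2)) (auto simp: f_def up_def prod_eq_iff)
  qed
qed

lemma permutes_restrict_in_BijGroup: "\<sigma> permutes \<Omega> \<Longrightarrow> restrict \<sigma> \<Omega> \<in> carrier (BijGroup \<Omega>)"
  by (simp add: BijGroup_def Bij_def permutes_imp_bij bij_betw_restrict_eq)

text \<open>inv_into UNIV is the plain inverse function; HOL-Algebra claims the notation inv.\<close>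

lemma inv_BijGroup_restrict_apply:
  assumes "\<sigma> permutes \<Omega>" "q \<in> \<Omega>"
  shows "(inv\<^bsub>BijGroup \<Omega>\<^esub> (restrict \<sigma> \<Omega>)) q = inv_into UNIV \<sigma> q"
proof -
  have \<sigma>: "restrict \<sigma> \<Omega> \<in> Bij \<Omega>"
    using permutes_restrict_in_BijGroup[OF assms(1)] by (simp add: BijGroup_def)
  moreover have "inv_into UNIV \<sigma> q \<in> \<Omega>"
    using permutes_in_image[OF assms(1), of "inv_into UNIV \<sigma> q"] assms by (simp add: permutes_inverses)
  ultimately have "inv_into \<Omega> (restrict \<sigma> \<Omega>) q = inv_into UNIV \<sigma> q"
    using assms by (intro inv_into_f_eq) (auto simp: Bij_def bij_betw_def permutes_inverses)
  then show ?thesis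
    using \<sigma> assms(2) by (simp add: inv_BijGroup)
qed

lemma eval_word_restrict_permutations_apply:
  assumes \<sigma>: "\<And>x. \<sigma> x permutes \<Omega>" and p: "p \<in> \<Omega>"
  shows "eval_word (BijGroup \<Omega>) (\<lambda>x. restrict (\<sigma> x) \<Omega>) (a # r) p
    = (if snd a then \<sigma> (fst a) else inv_into UNIV (\<sigma> (fst a))) (eval_word (BijGroup \<Omega>) (\<lambda>x. restrict (\<sigma> x) \<Omega>) r p)"
proof -
  let ?Sym = "BijGroup \<Omega>" and ?\<rho> = "\<lambda>x. restrict (\<sigma> x) \<Omega>"
  have \<rho>: "?\<rho> ` UNIV \<subseteq> carrier ?Sym"
    using \<sigma> permutes_restrict_in_BijGroup by blast
  have r: "eval_word ?Sym ?\<rho> r \<in> carrier ?Sym"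
    by (rule eval_word_closed[OF group_BijGroup \<rho>]) simp
  then have q: "eval_word ?Sym ?\<rho> r p \<in> \<Omega>"
    using p by (auto dest: BijGroup_bij_betw bij_betw_apply)
  have "eval_word ?Sym ?\<rho> (a # r) p = eval_letter ?Sym ?\<rho> a (eval_word ?Sym ?\<rho> r p)"
    using eval_letter_closed[OF group_BijGroup \<rho>] r p by (simp add: BijGroup_mult_apply)
  then show ?thesis
    using q \<sigma> by (simp add: eval_letter_def inv_BijGroup_restrict_apply)
qed

lemma eval_word_restrict_permutations_fixed:
  assumes \<sigma>: "\<And>x. \<sigma> x permutes S" and "S \<subseteq> \<Omega>" "q \<in> \<Omega>" "q \<notin> S"
  shows "eval_word (BijGroup \<Omega>) (\<lambda>x. restrict (\<sigma> x) \<Omega>) r q = q"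
proof -
  have "\<sigma> x permutes \<Omega>" for x
    using assms(2) by (rule permutes_subset[OF \<sigma>])
  then show ?thesis
    using assms(3,4)
    by (induction r) (auto simp: eval_word_restrict_permutations_apply BijGroup_one_apply
        permutes_not_in[OF \<sigma>] permutes_inv_eq[OF \<sigma>] simp del: eval_word_Cons)
qed

lemma dOm_one_le_card_support:
  assumes "finite S" "\<And>q. q \<in> \<Omega> \<Longrightarrow> q \<notin> S \<Longrightarrow> a q = q"
  shows "dOm \<Omega> a \<one>\<^bsub>BijGroup \<Omega>\<^esub> \<le> real (card S) / real (card \<Omega>)"
proof -
  have "{q \<in> \<Omega>. a q \<noteq> \<one>\<^bsub>BijGroup \<Omega>\<^esub> q} \<subseteq> S"
  proof
    fix q assume "q \<in> {q \<in> \<Omega>. a q \<noteq> \<one>\<^bsub>BijGroup \<Omega>\<^esub> q}"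
    then show "q \<in> S" using assms(2)[of q] by (auto simp: BijGroup_one_apply) blast
  qed
  then have "card {q \<in> \<Omega>. a q \<noteq> \<one>\<^bsub>BijGroup \<Omega>\<^esub> q} \<le> card S"
    using assms(1) by (rule card_mono[rotated])
  then show ?thesis
    by (simp add: dOm_def divide_right_mono)
qed

text \<open>Read from the right, w walks the point length w down to 0, while no word moves a point
  outside {0..length w}.\<close>

lemma reduced_word_nontrivial_small_support:
  fixes w :: "'x letter list"
  assumes "reduced w" "w \<noteq> []" "length w < N"
  obtains \<rho> :: "'x \<Rightarrow> nat \<Rightarrow> nat"
  where "\<And>x. \<rho> x \<in> carrier (BijGroup {..<N})"
    and "eval_word (BijGroup {..<N}) \<rho> w \<noteq> \<one>\<^bsub>BijGroup {..<N}\<^esub>"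
    and "\<And>r. dOm {..<N} (eval_word (BijGroup {..<N}) \<rho> r) \<one>\<^bsub>BijGroup {..<N}\<^esub> \<le> real (length w + 1) / real N"
proof -
  define L where "L = length w"
  obtain \<sigma> :: "'x \<Rightarrow> nat \<Rightarrow> nat" where \<sigma>_path: "\<And>x. \<sigma> x permutes {..L}"
    and down: "\<And>k. k < L \<Longrightarrow> snd (w ! k) \<Longrightarrow> \<sigma> (fst (w ! k)) (Suc k) = k"
    and up: "\<And>k. k < L \<Longrightarrow> \<not> snd (w ! k) \<Longrightarrow> \<sigma> (fst (w ! k)) k = Suc k"
    using reduced_word_path_permutations[OF assms(1)] unfolding L_def by blast
  have path_in: "{..L} \<subseteq> {..<N}" and L: "L \<in> {..<N}"
    using assms(3) by (auto simp: L_def)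
  have \<sigma>: "\<sigma> x permutes {..<N}" for x
    using path_in by (rule permutes_subset[OF \<sigma>_path])
  define \<rho> where "\<rho> x = restrict (\<sigma> x) {..<N}" for x
  let ?ev = "eval_word (BijGroup {..<N}) \<rho>"
  note ev_Cons = eval_word_restrict_permutations_apply[where \<sigma> = \<sigma>, OF \<sigma>, folded \<rho>_def]
  have walk: "?ev (drop k w) L = k" if "k \<le> L" for k
    using that
  proof (induction "L - k" arbitrary: k)
    case 0
    then show ?case using L by (simp add: L_def BijGroup_one_apply)
  next
    case (Suc n)
    then have k: "k < L" "?ev (drop (Suc k) w) L = Suc k" by auto
    then have "drop k w = w ! k # drop (Suc k) w" by (simp add: L_def Cons_nth_drop_Suc)
    then show ?case
      using ev_Cons[OF L, where a = "w ! k" and r = "drop (Suc k) w"] k down up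
      by (auto simp: permutes_inv_eq[OF \<sigma>])
  qed
  show ?thesis
  proof (rule that)
    show "\<rho> x \<in> carrier (BijGroup {..<N})" for x
      unfolding \<rho>_def by (rule permutes_restrict_in_BijGroup[OF \<sigma>])
    have "?ev w L = 0" "\<one>\<^bsub>BijGroup {..<N}\<^esub> L = L" "L \<noteq> 0"
      using walk[of 0] BijGroup_one_apply[OF L] assms(2) by (simp_all add: L_def)
    then show "?ev w \<noteq> \<one>\<^bsub>BijGroup {..<N}\<^esub>"
      by force
    show "dOm {..<N} (?ev r) \<one>\<^bsub>BijGroup {..<N}\<^esub> \<le> real (length w + 1) / real N" for r
      using dOm_one_le_card_support[of "{..L}" "{..<N}" "?ev r"]
        eval_word_restrict_permutations_fixed[where \<sigma> = \<sigma>, OF \<sigma>_path path_in, folded \<rho>_def]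
      by (simp add: L_def)
  qed
qed

section \<open>Lower bound for the stability function\<close>

lemma valid_pair_detects_short_relator:
  assumes G: "group G" and s: "s ` X \<subseteq> carrier G"
    and v: "v \<in> kerpi G X s" "v \<noteq> []" "length v < N"
    and valid: "valid_pair G X s (1 / real N) \<delta> E"
  shows "(\<exists>r \<in> E. r \<noteq> []) \<and> \<delta> \<le> real (length v + 1) / real N"
proof (rule ccontr)
  assume contra: "\<not> ?thesis"
  have v_ker: "reduced v" "v \<in> words_on X" "eval_word G s v = \<one>\<^bsub>G\<^esub>"
    using v(1) by (auto simp: kerpi_def free_elems_def)
  let ?Sym = "BijGroup {..<N}"
  obtain \<rho> where \<rho>: "\<And>x. \<rho> x \<in> carrier ?Sym" and v_moves: "eval_word ?Sym \<rho> v \<noteq> \<one>\<^bsub>?Sym\<^esub>"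
    and support: "\<And>r. dOm {..<N} (eval_word ?Sym \<rho> r) \<one>\<^bsub>?Sym\<^esub> \<le> real (length v + 1) / real N"
    using reduced_word_nontrivial_small_support[OF v_ker(1) v(2,3)] by blast
  have "0 < \<delta>" using valid by (simp add: valid_pair_def)
  have "dOm {..<N} (eval_word ?Sym \<rho> r) \<one>\<^bsub>?Sym\<^esub> < \<delta>" if "r \<in> E" for r
  proof (cases "r = []")
    case True
    then show ?thesis using \<open>0 < \<delta>\<close> by simp
  next
    case False
    then have "real (length v + 1) / real N < \<delta>" using contra that by auto
    then show ?thesis using support[of r] by linarith
  qed
  moreover have "\<rho> ` X \<subseteq> carrier ?Sym" using \<rho> by blast
  ultimately have "\<exists>\<psi> \<in> hom G ?Sym. \<forall>x \<in> X. dOm {..<N} (\<rho> x) (\<psi> (s x)) < 1 / real N"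
    using valid unfolding valid_pair_def by blast
  then obtain \<psi> where \<psi>: "\<psi> \<in> hom G ?Sym" and close: "\<And>x. x \<in> X \<Longrightarrow> dOm {..<N} (\<rho> x) (\<psi> (s x)) < 1 / real N"
    by blast
  have "\<rho> x = \<psi> (s x)" if "x \<in> X" for x
    using close[OF that] \<rho> hom_in_carrier[OF \<psi>] s that
    by (intro dOm_less_inverse_card_imp_eq) auto
  then have "eval_word ?Sym \<rho> v = eval_word ?Sym (\<psi> \<circ> s) v"
    using v_ker(2) by (intro eval_word_cong) (auto simp: words_on_def)
  also have "\<dots> = \<one>\<^bsub>?Sym\<^esub>"
    using eval_word_hom[OF G s group_BijGroup \<psi> v_ker(2)] v_ker(3) hom_one[OF \<psi> G group_BijGroup] by simp
  finally show False using v_moves by contradiction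
qed

text \<open>A nonempty relator r of E is itself a relator, so if it is shorter than N it bounds \<delta> by
  (length r + 1)/N \<le> 2 norm E / N.\<close>

lemma valid_pair_norm_ratio_ge:
  assumes G: "group G" and s: "s ` X \<subseteq> carrier G"
    and w: "w \<in> kerpi G X s" "w \<noteq> []" "length w < N"
    and valid: "valid_pair G X s (1 / real N) \<delta> E"
  shows "real N / 2 \<le> real (norm_rel E) / \<delta>"
proof -
  have \<delta>: "0 < \<delta>" "\<delta> \<le> 1" and E: "finite E" "E \<subseteq> kerpi G X s"
    using valid by (auto simp: valid_pair_def)
  obtain r where r: "r \<in> E" "r \<noteq> []"
    using valid_pair_detects_short_relator[OF G s w valid] by blast
  have r_norm: "length r \<le> norm_rel E"
    unfolding norm_rel_def using r E by (intro member_le_sum) auto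
  have norm_le_ratio: "real (norm_rel E) \<le> real (norm_rel E) / \<delta>"
    using \<delta> by (simp add: le_divide_eq mult_left_le)
  show ?thesis
  proof (cases "N \<le> length r")
    case True
    then show ?thesis using r_norm norm_le_ratio by linarith
  next
    case False
    then have "\<delta> \<le> real (length r + 1) / real N"
      using valid_pair_detects_short_relator[OF G s _ r(2) _ valid] r E by auto
    moreover have "real (length r + 1) \<le> 2 * real (norm_rel E)"
      using r_norm r(2) by (cases r) auto
    ultimately show ?thesis
      using \<delta> False by (simp add: field_simps)
  qed
qed

lemma stab_fun_ge_half:
  assumes "group G" "s ` X \<subseteq> carrier G" "stable G X s"
    and "w \<in> kerpi G X s" "w \<noteq> []" "length w < N"
  shows "real N / 2 \<le> stab_fun G X s (real N)"
proof -
  define S where "S = {real (norm_rel E) / \<delta> | \<delta> E. valid_pair G X s (1 / real N) \<delta> E}"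
  have "0 < N" using assms(6) by simp
  then have "S \<noteq> {}"
    using assms(3)[unfolded stable_def, rule_format, of "1 / real N"] by (auto simp: S_def)
  moreover have "real N / 2 \<le> y" if "y \<in> S" for y
    using that valid_pair_norm_ratio_ge[OF assms(1,2,4-6)] by (auto simp: S_def)
  ultimately have "real N / 2 \<le> Inf S"
    by (rule cInf_greatest)
  then show ?thesis
    by (simp add: stab_fun_def S_def)
qed

lemma stab_fun_less_imp_valid_pair:
  assumes "stable G X s" "0 < x" "stab_fun G X s x < c"
  obtains \<delta> E where "valid_pair G X s (1 / x) \<delta> E" "real (norm_rel E) < c * \<delta>"
proof -
  define S where "S = {real (norm_rel E) / \<delta> | \<delta> E. valid_pair G X s (1 / x) \<delta> E}"
  have "S \<noteq> {}"
    using assms(1)[unfolded stable_def, rule_format, of "1 / x"] assms(2) by (auto simp: S_def)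
  moreover have "Inf S < c"
    using assms(3) by (simp add: stab_fun_def S_def)
  ultimately obtain y where "y \<in> S" "y < c"
    using cInf_lessD by blast
  then obtain \<delta> E where valid: "valid_pair G X s (1 / x) \<delta> E" and "real (norm_rel E) / \<delta> < c"
    by (auto simp: S_def)
  moreover have "0 < \<delta>"
    using valid by (simp add: valid_pair_def)
  ultimately show ?thesis
    using that by (simp add: divide_less_eq)
qed

section \<open>Almost representations along words\<close>

context
  fixes G :: "('g, 'm) monoid_scheme" and X :: "'x set" and s :: "'x \<Rightarrow> 'g"
    and t :: nat and \<Omega> :: "nat set" and \<phi> :: "'g \<Rightarrow> nat \<Rightarrow> nat"
  assumes G: "group G" and s: "s ` X \<subseteq> carrier G" and t: "0 < t"
    and \<phi>: "almost_rep G (ballS G X s t) (1 / real t) \<Omega> \<phi>"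
begin

interpretation G: group G by (rule G)
interpretation Sym: group "BijGroup \<Omega>" by (rule group_BijGroup)

lemma almost_rep_finite: "finite \<Omega>"
  using \<phi> by (simp add: almost_rep_def)

lemma almost_rep_closed: "g \<in> ballS G X s t \<Longrightarrow> \<phi> g \<in> carrier (BijGroup \<Omega>)"
  using \<phi> by (auto simp: almost_rep_def)

lemma almost_rep_one: "\<phi> \<one>\<^bsub>G\<^esub> = \<one>\<^bsub>BijGroup \<Omega>\<^esub>"
  using \<phi> one_in_ballS[of G X s t] by (simp add: almost_rep_def)

lemma almost_rep_generators_closed: "(\<phi> \<circ> s) ` X \<subseteq> carrier (BijGroup \<Omega>)"
  using almost_rep_closed generator_in_ballS[OF G s] t by auto

lemma almost_rep_mult:
  "g \<in> ballS G X s t \<Longrightarrow> h \<in> ballS G X s t \<Longrightarrow> g \<otimes>\<^bsub>G\<^esub> h \<in> ballS G X s t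
    \<Longrightarrow> dOm \<Omega> (\<phi> (g \<otimes>\<^bsub>G\<^esub> h)) (\<phi> g \<otimes>\<^bsub>BijGroup \<Omega>\<^esub> \<phi> h) < 1 / real t"
  using \<phi> by (simp add: almost_rep_def)

lemma almost_rep_far:
  "g \<in> ballS G X s t \<Longrightarrow> g \<noteq> \<one>\<^bsub>G\<^esub> \<Longrightarrow> 1 - 1 / real t < dOm \<Omega> (\<phi> g) \<one>\<^bsub>BijGroup \<Omega>\<^esub>"
  using \<phi> by (simp add: almost_rep_def)

text \<open>An inverse letter is moved to the other side by left invariance, where it becomes a
  multiplication defect of \<phi>.\<close>

lemma dOm_almost_rep_letter_le:
  assumes a: "fst a \<in> X" and g: "g \<in> ballS G X s t"
    and p: "eval_letter G s a \<otimes>\<^bsub>G\<^esub> g \<in> ballS G X s t" and R: "R \<in> carrier (BijGroup \<Omega>)"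
  shows "dOm \<Omega> (eval_letter (BijGroup \<Omega>) (\<phi> \<circ> s) a \<otimes>\<^bsub>BijGroup \<Omega>\<^esub> R) (\<phi> (eval_letter G s a \<otimes>\<^bsub>G\<^esub> g))
    \<le> dOm \<Omega> R (\<phi> g) + 1 / real t"
proof -
  let ?Sym = "BijGroup \<Omega>"
  define x where "x = s (fst a)"
  define p where "p = eval_letter G s a \<otimes>\<^bsub>G\<^esub> g"
  have x: "x \<in> carrier G" "x \<in> ballS G X s t"
    using a s t generator_in_ballS[OF G s] by (auto simp: x_def)
  have "g \<in> carrier G"
    using g ballS_subset_carrier[OF G s] by auto
  have pB: "p \<in> ballS G X s t"
    using p by (simp add: p_def)
  note closed = x \<open>g \<in> carrier G\<close> R almost_rep_closed[OF g] almost_rep_closed[OF pB] almost_rep_closed[OF x(2)]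
  show ?thesis
  proof (cases "snd a")
    case True
    then have "p = x \<otimes>\<^bsub>G\<^esub> g" by (simp add: p_def x_def eval_letter_def)
    have "dOm \<Omega> (\<phi> x \<otimes>\<^bsub>?Sym\<^esub> R) (\<phi> p)
        \<le> dOm \<Omega> (\<phi> x \<otimes>\<^bsub>?Sym\<^esub> R) (\<phi> x \<otimes>\<^bsub>?Sym\<^esub> \<phi> g) + dOm \<Omega> (\<phi> x \<otimes>\<^bsub>?Sym\<^esub> \<phi> g) (\<phi> p)"
      by (rule dOm_triangle[OF almost_rep_finite])
    also have "\<dots> \<le> dOm \<Omega> R (\<phi> g) + 1 / real t"
      using almost_rep_mult[of x g] closed g pB \<open>p = x \<otimes>\<^bsub>G\<^esub> g\<close> by (simp add: dOm_mult_left dOm_sym)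
    finally show ?thesis using True by (simp add: eval_letter_def x_def p_def)
  next
    case False
    then have "g = x \<otimes>\<^bsub>G\<^esub> p"
      using closed by (simp add: p_def x_def eval_letter_def G.m_assoc[symmetric])
    have "dOm \<Omega> (inv\<^bsub>?Sym\<^esub> (\<phi> x) \<otimes>\<^bsub>?Sym\<^esub> R) (\<phi> p)
        = dOm \<Omega> (\<phi> x \<otimes>\<^bsub>?Sym\<^esub> (inv\<^bsub>?Sym\<^esub> (\<phi> x) \<otimes>\<^bsub>?Sym\<^esub> R)) (\<phi> x \<otimes>\<^bsub>?Sym\<^esub> \<phi> p)"
      using closed by (simp add: dOm_mult_left)
    also have "\<dots> = dOm \<Omega> R (\<phi> x \<otimes>\<^bsub>?Sym\<^esub> \<phi> p)"
      using closed by (simp add: Sym.m_assoc[symmetric])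
    also have "\<dots> \<le> dOm \<Omega> R (\<phi> g) + dOm \<Omega> (\<phi> g) (\<phi> x \<otimes>\<^bsub>?Sym\<^esub> \<phi> p)"
      by (rule dOm_triangle[OF almost_rep_finite])
    also have "\<dots> \<le> dOm \<Omega> R (\<phi> g) + 1 / real t"
      using almost_rep_mult[of x p] closed g pB \<open>g = x \<otimes>\<^bsub>G\<^esub> p\<close> by simp
    finally show ?thesis using False by (simp add: eval_letter_def x_def p_def)
  qed
qed

lemma dOm_eval_word_almost_rep_le:
  assumes "u \<in> words_on X" "length u \<le> t"
  shows "dOm \<Omega> (eval_word (BijGroup \<Omega>) (\<phi> \<circ> s) u) (\<phi> (eval_word G s u)) \<le> real (length u) / real t"
  using assms
proof (induction u)
  case (Cons a u)
  then have a: "fst a \<in> X" and u: "u \<in> words_on X" "length u \<le> t" by auto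
  have "dOm \<Omega> (eval_word (BijGroup \<Omega>) (\<phi> \<circ> s) (a # u)) (\<phi> (eval_word G s (a # u)))
      \<le> dOm \<Omega> (eval_word (BijGroup \<Omega>) (\<phi> \<circ> s) u) (\<phi> (eval_word G s u)) + 1 / real t"
    unfolding eval_word_Cons
    by (rule dOm_almost_rep_letter_le[OF a eval_word_in_ballS[OF u]
          _ eval_word_closed[OF group_BijGroup almost_rep_generators_closed u(1)]])
      (use eval_word_in_ballS[OF Cons.prems] in simp)
  also have "\<dots> \<le> real (length u) / real t + 1 / real t"
    using Cons.IH[OF u] by (simp add: comp_def)
  finally show ?case by (simp add: add_divide_distrib comp_def)
qed (simp add: almost_rep_one)

lemma dOm_almost_rep_hom_le:
  assumes \<psi>: "\<psi> \<in> hom G (BijGroup \<Omega>)"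
    and close: "\<And>x. x \<in> X \<Longrightarrow> dOm \<Omega> (\<phi> (s x)) (\<psi> (s x)) \<le> \<epsilon>"
    and w: "w \<in> words_on X" "length w \<le> t"
  shows "dOm \<Omega> (\<phi> (eval_word G s w)) (\<psi> (eval_word G s w)) \<le> real (length w) / real t + real (length w) * \<epsilon>"
proof -
  let ?\<phi>w = "eval_word (BijGroup \<Omega>) (\<phi> \<circ> s) w"
  have "dOm \<Omega> (\<phi> (eval_word G s w)) ?\<phi>w \<le> real (length w) / real t"
    using dOm_eval_word_almost_rep_le[OF w] by (simp add: dOm_sym)
  moreover have "dOm \<Omega> ?\<phi>w (\<psi> (eval_word G s w)) \<le> real (length w) * \<epsilon>"
    using dOm_eval_word_le[OF almost_rep_finite almost_rep_generators_closed _ _ w(1), of "\<psi> \<circ> s" \<epsilon>]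
      eval_word_hom[OF G s group_BijGroup \<psi> w(1)] hom_in_carrier[OF \<psi>] s close by auto
  ultimately show ?thesis
    using dOm_triangle[OF almost_rep_finite, of "\<phi> (eval_word G s w)" "\<psi> (eval_word G s w)" ?\<phi>w]
    by linarith
qed

text \<open>The relators of E are shorter than t, so \<phi> nearly kills them and stability applies to
  the images of the generators.\<close>

lemma valid_pair_close_hom:
  assumes valid: "valid_pair G X s \<epsilon> \<delta> E" and norm: "real (norm_rel E) < real t * \<delta>"
  obtains \<psi> where "\<psi> \<in> hom G (BijGroup \<Omega>)" "\<And>x. x \<in> X \<Longrightarrow> dOm \<Omega> (\<phi> (s x)) (\<psi> (s x)) < \<epsilon>"
proof -
  have \<delta>: "\<delta> \<le> 1" and E: "finite E" "E \<subseteq> kerpi G X s"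
    using valid by (auto simp: valid_pair_def)
  have "dOm \<Omega> (eval_word (BijGroup \<Omega>) (\<phi> \<circ> s) r) \<one>\<^bsub>BijGroup \<Omega>\<^esub> < \<delta>" if r: "r \<in> E" for r
  proof -
    have r_ker: "r \<in> words_on X" "eval_word G s r = \<one>\<^bsub>G\<^esub>"
      using r E by (auto simp: kerpi_def free_elems_def)
    have "length r \<le> norm_rel E"
      unfolding norm_rel_def using r E by (intro member_le_sum) auto
    then have short: "real (length r) < real t * \<delta>" using norm by linarith
    also have "\<dots> \<le> real t" using \<delta> by (simp add: mult_left_le)
    finally have "length r \<le> t" by simp
    then have "dOm \<Omega> (eval_word (BijGroup \<Omega>) (\<phi> \<circ> s) r) \<one>\<^bsub>BijGroup \<Omega>\<^esub> \<le> real (length r) / real t"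
      using dOm_eval_word_almost_rep_le[OF r_ker(1)] r_ker(2) by (simp add: almost_rep_one)
    also have "\<dots> < \<delta>" using short t by (simp add: divide_less_eq mult.commute)
    finally show ?thesis .
  qed
  then have "\<exists>\<psi> \<in> hom G (BijGroup \<Omega>). \<forall>x \<in> X. dOm \<Omega> ((\<phi> \<circ> s) x) (\<psi> (s x)) < \<epsilon>"
    using valid almost_rep_finite almost_rep_generators_closed unfolding valid_pair_def by blast
  then show ?thesis
    using that by auto
qed

text \<open>A word for g\<inverse>h of length at most 2l is mapped by \<phi> far from the identity, but close to
  \<psi>(g\<inverse>h) = 1.\<close>

lemma close_hom_inj_on_ballS:
  assumes \<psi>: "\<psi> \<in> hom G (BijGroup \<Omega>)"
    and close: "\<And>x. x \<in> X \<Longrightarrow> dOm \<Omega> (\<phi> (s x)) (\<psi> (s x)) \<le> \<epsilon>"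
    and \<epsilon>: "0 \<le> \<epsilon>" and small: "2 * real l * \<epsilon> + real (2 * l + 1) / real t \<le> 1"
  shows "inj_on \<psi> (ballS G X s l)"
proof (rule inj_onI, rule ccontr)
  interpret \<psi>: group_hom G "BijGroup \<Omega>" \<psi>
    using \<psi> G by (simp add: group_hom_def group_hom_axioms_def group_BijGroup)
  fix g h assume gh: "g \<in> ballS G X s l" "h \<in> ballS G X s l" "\<psi> g = \<psi> h" "g \<noteq> h"
  then have gh_carrier: "g \<in> carrier G" "h \<in> carrier G"
    using ballS_subset_carrier[OF G s] by auto
  obtain w where w: "w \<in> words_on X" "length w \<le> 2 * l" "eval_word G s w = inv\<^bsub>G\<^esub> g \<otimes>\<^bsub>G\<^esub> h"
    using ballS_inv_mult_word[OF G s gh(1,2)] .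
  have "0 \<le> 2 * real l * \<epsilon>"
    using \<epsilon> by simp
  then have "real (2 * l + 1) / real t \<le> 1"
    using small by linarith
  then have "length w \<le> t"
    using w(2) t by (simp add: divide_le_eq)
  have "eval_word G s w \<noteq> \<one>\<^bsub>G\<^esub>"
    using w(3) gh(4) gh_carrier G.inv_comm G.inv_equality by (metis G.inv_closed G.inv_inv)
  then have "1 - 1 / real t < dOm \<Omega> (\<phi> (eval_word G s w)) \<one>\<^bsub>BijGroup \<Omega>\<^esub>"
    by (intro almost_rep_far eval_word_in_ballS[OF w(1) \<open>length w \<le> t\<close>])
  also have "\<dots> \<le> real (length w) / real t + real (length w) * \<epsilon>"
    using dOm_almost_rep_hom_le[OF \<psi> close w(1) \<open>length w \<le> t\<close>] w(3) gh gh_carrier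
    by (simp add: \<psi>.hom_inv)
  also have "\<dots> \<le> real (2 * l) / real t + 2 * real l * \<epsilon>"
    using w(2) \<epsilon> by (intro add_mono divide_right_mono mult_right_mono) auto
  finally show False
    using small by (simp add: add_divide_distrib)
qed

end

section \<open>Finite quotients through symmetric groups\<close>

lemma Bij_eq_restrict_permutations: "Bij \<Omega> = (\<lambda>p. restrict p \<Omega>) ` {p. p permutes \<Omega>}"
proof
  show "(\<lambda>p. restrict p \<Omega>) ` {p. p permutes \<Omega>} \<subseteq> Bij \<Omega>"
    using permutes_restrict_in_BijGroup by (auto simp: BijGroup_def)
next
  show "Bij \<Omega> \<subseteq> (\<lambda>p. restrict p \<Omega>) ` {p. p permutes \<Omega>}"
  proof
    fix a assume a: "a \<in> Bij \<Omega>"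
    define p where "p x = (if x \<in> \<Omega> then a x else x)" for x
    have "p permutes \<Omega>"
      using a by (intro bij_imp_permutes) (auto simp: Bij_def p_def cong: bij_betw_cong)
    moreover have "a = restrict p \<Omega>"
      using a by (intro extensionalityI[of _ \<Omega>]) (auto simp: Bij_def p_def)
    ultimately show "a \<in> (\<lambda>p. restrict p \<Omega>) ` {p. p permutes \<Omega>}" by blast
  qed
qed

lemma finite_card_Bij_le_fact:
  assumes "finite \<Omega>"
  shows "finite (Bij \<Omega>)" "card (Bij \<Omega>) \<le> fact (card \<Omega>)"
proof -
  show "finite (Bij \<Omega>)"
    by (simp add: Bij_eq_restrict_permutations finite_permutations[OF assms])
  have "card (Bij \<Omega>) \<le> card {p. p permutes \<Omega>}"
    unfolding Bij_eq_restrict_permutations by (rule card_image_le[OF finite_permutations[OF assms]])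
  then show "card (Bij \<Omega>) \<le> fact (card \<Omega>)"
    by (simp add: card_permutations[OF refl assms])
qed

text \<open>The profile R only ranges over groups carried by nat, so a finite quotient is copied
  there along an injection.\<close>

definition transfer_group :: "('a, 'm) monoid_scheme \<Rightarrow> ('a \<Rightarrow> 'b) \<Rightarrow> 'b monoid" where
  "transfer_group H e = \<lparr>carrier = e ` carrier H,
     monoid.mult = (\<lambda>a b. e (inv_into (carrier H) e a \<otimes>\<^bsub>H\<^esub> inv_into (carrier H) e b)),
     one = e \<one>\<^bsub>H\<^esub>\<rparr>"

lemma group_transfer_group:
  assumes "group H" "inj_on e (carrier H)"
  shows "group (transfer_group H e)" "e \<in> hom H (transfer_group H e)"
proof -
  interpret H: group H by (rule assms(1))
  show "group (transfer_group H e)"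
  proof (rule groupI)
    fix x assume "x \<in> carrier (transfer_group H e)"
    then obtain a where a: "a \<in> carrier H" "x = e a" by (auto simp: transfer_group_def)
    show "\<exists>y \<in> carrier (transfer_group H e). y \<otimes>\<^bsub>transfer_group H e\<^esub> x = \<one>\<^bsub>transfer_group H e\<^esub>"
      by (rule bexI[of _ "e (inv\<^bsub>H\<^esub> a)"]) (use a assms(2) in \<open>auto simp: transfer_group_def\<close>)
  qed (use assms(2) in \<open>auto simp: transfer_group_def H.m_assoc\<close>)
  show "e \<in> hom H (transfer_group H e)"
    using assms(2) by (auto simp: hom_def transfer_group_def)
qed

lemma rf_profile_le_card:
  assumes "group G" "s ` X \<subseteq> carrier G" "group H" "finite (carrier H)"
    and "h \<in> hom G H" "inj_on h (ballS G X s l)"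
  shows "rf_profile G X s l \<le> enat (card (carrier H))"
proof -
  obtain e :: "_ \<Rightarrow> nat" where e: "inj_on e (carrier H)"
    using finite_imp_inj_to_nat_seg[OF assms(4)] by blast
  let ?\<Delta> = "transfer_group H e"
  have "e \<circ> h \<in> hom G ?\<Delta>"
    using hom_compose[OF assms(5) group_transfer_group(2)[OF assms(3) e]] .
  moreover have "inj_on (e \<circ> h) (ballS G X s l)"
    using hom_in_carrier[OF assms(5)] ballS_subset_carrier[OF assms(1,2)]
    by (intro comp_inj_on[OF assms(6) inj_on_subset[OF e]]) auto
  moreover have "card (carrier ?\<Delta>) = card (carrier H)" "finite (carrier ?\<Delta>)"
    using e assms(4) by (simp_all add: transfer_group_def card_image)
  ultimately show ?thesis
    unfolding rf_profile_def using group_transfer_group(1)[OF assms(3) e]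
    by (intro Inf_lower) force
qed

lemma rf_profile_le_fact_card:
  assumes "group G" "s ` X \<subseteq> carrier G" "finite \<Omega>"
    and "\<psi> \<in> hom G (BijGroup \<Omega>)" "inj_on \<psi> (ballS G X s l)"
  shows "rf_profile G X s l \<le> enat (fact (card \<Omega>))"
proof -
  have "finite (carrier (BijGroup \<Omega>))" "card (carrier (BijGroup \<Omega>)) \<le> fact (card \<Omega>)"
    using finite_card_Bij_le_fact[OF assms(3)] by (simp_all add: BijGroup_def)
  then show ?thesis
    using rf_profile_le_card[OF assms(1,2) group_BijGroup _ assms(4,5)] order_trans by fastforce
qed

lemma sofic_profile_attained:
  assumes "sofic G" "group G" "finite X" "s ` X \<subseteq> carrier G" "0 < t"
  obtains \<Omega> :: "nat set" and \<phi>
  where "card \<Omega> = sofic_profile G X s t" "almost_rep G (ballS G X s t) (1 / real t) \<Omega> \<phi>"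
proof -
  have "\<exists>\<Omega> :: nat set. \<exists>\<phi>. almost_rep G (ballS G X s t) (1 / real t) \<Omega> \<phi>"
    using assms by (intro assms(1)[unfolded sofic_def, rule_format])
      (auto simp: finite_ballS ballS_subset_carrier)
  then have "\<exists>n (\<Omega> :: nat set) \<phi>. card \<Omega> = n \<and> almost_rep G (ballS G X s t) (1 / real t) \<Omega> \<phi>"
    by blast
  from LeastI_ex[OF this] show ?thesis
    using that unfolding sofic_profile_def by blast
qed

lemma rf_profile_le_fact_sofic_profile:
  assumes G: "group G" and "finite X" and s: "s ` X \<subseteq> carrier G" and "sofic G" "stable G X s"
    and l: "1 \<le> l" and F: "5 * real l \<le> stab_fun G X s (10 * real l)"
  shows "rf_profile G X s l \<le> enat (fact (sofic_profile G X s (nat \<lfloor>2 * stab_fun G X s (10 * real l)\<rfloor>)))"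
proof -
  define t where "t = nat \<lfloor>2 * stab_fun G X s (10 * real l)\<rfloor>"
  have t: "10 * l \<le> t" "stab_fun G X s (10 * real l) < real t"
    using F l by (simp_all add: t_def) linarith+
  then have "0 < t" using l by simp
  obtain \<delta> E where valid: "valid_pair G X s (1 / (10 * real l)) \<delta> E" "real (norm_rel E) < real t * \<delta>"
    using stab_fun_less_imp_valid_pair[OF assms(5) _ t(2)] l by auto
  obtain \<Omega> :: "nat set" and \<phi> where \<Omega>: "card \<Omega> = sofic_profile G X s t"
    and \<phi>: "almost_rep G (ballS G X s t) (1 / real t) \<Omega> \<phi>"
    using sofic_profile_attained[OF assms(4,1,2,3) \<open>0 < t\<close>] by blast
  obtain \<psi> where \<psi>: "\<psi> \<in> hom G (BijGroup \<Omega>)"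
    and close: "\<And>x. x \<in> X \<Longrightarrow> dOm \<Omega> (\<phi> (s x)) (\<psi> (s x)) < 1 / (10 * real l)"
    using valid_pair_close_hom[OF G s \<open>0 < t\<close> \<phi> valid] by blast
  have "2 * real l * (1 / (10 * real l)) + real (2 * l + 1) / real t \<le> 1"
    using t(1) l by (simp add: field_simps)
  then have "inj_on \<psi> (ballS G X s l)"
    using close_hom_inj_on_ballS[OF G s \<open>0 < t\<close> \<phi> \<psi>, of "1 / (10 * real l)" l] close
    by (auto intro: less_imp_le)
  then show ?thesis
    using rf_profile_le_fact_card[OF G s almost_rep_finite[OF G s \<open>0 < t\<close> \<phi>] \<psi>]
    by (simp add: \<Omega> t_def)
qed

theorem proposition2p20:
  fixes G :: "('g, 'm) monoid_scheme" and X :: "'x set" and s :: "'x \<Rightarrow> 'g"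
  assumes "group G"
    and "finite X"
    and "s ` X \<subseteq> carrier G"
    and "\<forall>g \<in> carrier G. \<exists>w \<in> free_elems X. eval_word G s w = g"
    and "\<exists>w \<in> free_elems X. w \<noteq> [] \<and> eval_word G s w = \<one>\<^bsub>G\<^esub>"
    and "sofic G"
    and "stable G X s"
  shows "\<exists>C > 0. \<forall>l::nat. real l \<ge> C \<longrightarrow>
           enat (fact (sofic_profile_real G X s (2 * stab_fun G X s (10 * real l))))
             \<ge> rf_profile G X s l"
proof -
  obtain w where w: "w \<in> kerpi G X s" "w \<noteq> []"
    using assms(5) by (auto simp: kerpi_def)
  show ?thesis
  proof (intro exI[of _ "real (length w + 1)"] conjI allI impI)
    fix l :: nat assume "real (length w + 1) \<le> real l"
    then have l: "1 \<le> l" "length w < 10 * l" by simp_all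
    have "5 * real l \<le> stab_fun G X s (10 * real l)"
      using stab_fun_ge_half[OF assms(1,3,7) w l(2)] by simp
    then show "rf_profile G X s l \<le> enat (fact (sofic_profile_real G X s (2 * stab_fun G X s (10 * real l))))"
      using rf_profile_le_fact_sofic_profile[OF assms(1-3,6,7) l(1)] by (simp add: sofic_profile_real_def)
  qed simp
qed

end
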